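(* Let $Q$ be a conjunctive query over $\mathcal{D}^p$, $D^p$ an instance of $\mathcal{D}^p$ (consistent w.r.t. a set $\mathcal{IC}$ of denial constraints), and $\vec t$ an answer of $Q$ with minimum probability $p^{\min}$ and maximum probability $p^{\max}$. Let $m$ be the number of tuples in $D^p$ plus $3$, and $a$ the maximum among the numerators and denominators of the probabilities of the tuples of $D^p$. Then $p^{\min}$ and $p^{\max}$ are expressible as fractions $\eta/\delta$ with integers $0\le\eta\le(ma)^m$ and $0<\delta\le(ma)^m$.
   Context: A PDB instance $D^p$ of a schema $\mathcal{D}^p$ is a finite set of tuples, each with a rational probability $p(t)\in[0,1]$ given as a fraction. Possible worlds are subsets of its tuples; an interpretation is a probability distribution on possible worlds such that the total probability of worlds containing $t$ is $p(t)$. A model w.r.t. a set $\mathcal{IC}$ of denial constraints is an interpretation assigning probability $0$ to every world violating $\mathcal{IC}$. A conjunctive query is $Q(\vec x)=\exists\vec z.\,R_1(\vec y_1)\wedge\dots\wedge R_m(\vec y_m)\wedge\phi$, $\phi$ a conjunction of comparisons. For a model $M$ and ground tuple $\vec t$, $p^M_Q(\vec t)$ is the total $M$-probability of worlds $w$ with $w\models Q(\vec t)$. $\vec t$ is an answer of $Q$ with minimum probability $p^{\min}=\min_M p^M_Q(\vec t)$ and maximum probability $p^{\max}=\max_M p^M_Q(\vec t)$ over all models $M$ (where $\vec t$ is required to satisfy $w\models Q(\vec t)$ for some possible world $w$). *)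

theory Defs
  imports Complex_Main
begin

type_synonym ('r, 'c) fact = "'r \<times> 'c list"

datatype ('v, 'c) qterm = Var 'v | Const 'c

datatype cmp_op = CEq | CNeq | CLt | CLe

text \<open>A comparison between two terms (greater-than variants by swapping arguments).\<close>
type_synonym ('v, 'c) comparison = "cmp_op \<times> ('v, 'c) qterm \<times> ('v, 'c) qterm"

type_synonym ('r, 'v, 'c) qatom = "'r \<times> ('v, 'c) qterm list"

record ('r, 'v, 'c) cq =
  head :: "'v list"
  atoms :: "('r, 'v, 'c) qatom list"
  comps :: "('v, 'c) comparison list"

text \<open>Denial constraint: \<not>\<exists>z. R1(y1) \<and> ... \<and> Rk(yk) \<and> \<phi>\<close>
record ('r, 'v, 'c) denial =
  dc_atoms :: "('r, 'v, 'c) qatom list"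
  dc_comps :: "('v, 'c) comparison list"

fun eval_term :: "('v \<Rightarrow> 'c) \<Rightarrow> ('v, 'c) qterm \<Rightarrow> 'c" where
  "eval_term \<nu> (Var x) = \<nu> x"
| "eval_term \<nu> (Const c) = c"

fun eval_cmp :: "('v \<Rightarrow> 'c::linorder) \<Rightarrow> ('v, 'c) comparison \<Rightarrow> bool" where
  "eval_cmp \<nu> (CEq, s, t) = (eval_term \<nu> s = eval_term \<nu> t)"
| "eval_cmp \<nu> (CNeq, s, t) = (eval_term \<nu> s \<noteq> eval_term \<nu> t)"
| "eval_cmp \<nu> (CLt, s, t) = (eval_term \<nu> s < eval_term \<nu> t)"
| "eval_cmp \<nu> (CLe, s, t) = (eval_term \<nu> s \<le> eval_term \<nu> t)"

definition ground_atom :: "('v \<Rightarrow> 'c) \<Rightarrow> ('r, 'v, 'c) qatom \<Rightarrow> ('r, 'c) fact" where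
  "ground_atom \<nu> A = (fst A, map (eval_term \<nu>) (snd A))"

definition body_holds ::
  "('r, 'c::linorder) fact set \<Rightarrow> ('v \<Rightarrow> 'c) \<Rightarrow> ('r, 'v, 'c) qatom list \<Rightarrow> ('v, 'c) comparison list \<Rightarrow> bool" where
  "body_holds w \<nu> as cs \<longleftrightarrow> (\<forall>A\<in>set as. ground_atom \<nu> A \<in> w) \<and> (\<forall>c\<in>set cs. eval_cmp \<nu> c)"

definition sat_query :: "('r, 'c::linorder) fact set \<Rightarrow> ('r, 'v, 'c) cq \<Rightarrow> 'c list \<Rightarrow> bool" where
  "sat_query w Q t \<longleftrightarrow> (\<exists>\<nu>. map \<nu> (head Q) = t \<and> body_holds w \<nu> (atoms Q) (comps Q))"

definition violates :: "('r, 'c::linorder) fact set \<Rightarrow> ('r, 'v, 'c) denial set \<Rightarrow> bool" where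
  "violates w IC \<longleftrightarrow> (\<exists>d\<in>IC. \<exists>\<nu>. body_holds w \<nu> (dc_atoms d) (dc_comps d))"

definition pdb :: "('r, 'c) fact set \<Rightarrow> (('r, 'c) fact \<Rightarrow> rat) \<Rightarrow> bool" where
  "pdb D p \<longleftrightarrow> finite D \<and> (\<forall>t\<in>D. 0 \<le> p t \<and> p t \<le> 1)"

definition pdb_interp ::
  "('r, 'c) fact set \<Rightarrow> (('r, 'c) fact \<Rightarrow> rat) \<Rightarrow> (('r, 'c) fact set \<Rightarrow> real) \<Rightarrow> bool" where
  "pdb_interp D p M \<longleftrightarrow>
     (\<forall>w\<in>Pow D. 0 \<le> M w) \<and> (\<Sum>w\<in>Pow D. M w) = 1 \<and>
     (\<forall>t\<in>D. (\<Sum>w\<in>{w\<in>Pow D. t \<in> w}. M w) = real_of_rat (p t))"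

definition is_model ::
  "('r, 'c::linorder) fact set \<Rightarrow> (('r, 'c) fact \<Rightarrow> rat) \<Rightarrow> ('r, 'v, 'c) denial set
     \<Rightarrow> (('r, 'c) fact set \<Rightarrow> real) \<Rightarrow> bool" where
  "is_model D p IC M \<longleftrightarrow> pdb_interp D p M \<and> (\<forall>w\<in>Pow D. violates w IC \<longrightarrow> M w = 0)"

definition consistent ::
  "('r, 'c::linorder) fact set \<Rightarrow> (('r, 'c) fact \<Rightarrow> rat) \<Rightarrow> ('r, 'v, 'c) denial set \<Rightarrow> bool" where
  "consistent D p IC \<longleftrightarrow> (\<exists>M. is_model D p IC M)"

definition query_prob ::
  "('r, 'c::linorder) fact set \<Rightarrow> (('r, 'c) fact set \<Rightarrow> real) \<Rightarrow> ('r, 'v, 'c) cq \<Rightarrow> 'c list \<Rightarrow> real" where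
  "query_prob D M Q t = (\<Sum>w\<in>{w\<in>Pow D. sat_query w Q t}. M w)"

text \<open>The set of values \<open>p^M_Q(t)\<close> over all models \<open>M\<close>; \<open>p^min\<close>/\<open>p^max\<close> are its least/greatest elements.\<close>
definition model_probs ::
  "('r, 'c::linorder) fact set \<Rightarrow> (('r, 'c) fact \<Rightarrow> rat) \<Rightarrow> ('r, 'v, 'c) denial set
     \<Rightarrow> ('r, 'v, 'c) cq \<Rightarrow> 'c list \<Rightarrow> real set" where
  "model_probs D p IC Q t = {query_prob D M Q t | M. is_model D p IC M}"

definition is_answer :: "('r, 'c::linorder) fact set \<Rightarrow> ('r, 'v, 'c) cq \<Rightarrow> 'c list \<Rightarrow> bool" where
  "is_answer D Q t \<longleftrightarrow> (\<exists>w\<in>Pow D. sat_query w Q t)"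

text \<open>\<open>a\<close>: maximum among numerators and denominators of the tuple probabilities
  (in lowest terms; 1 is included so that the maximum is defined for an empty instance).\<close>
definition max_num_den :: "('r, 'c) fact set \<Rightarrow> (('r, 'c) fact \<Rightarrow> rat) \<Rightarrow> int" where
  "max_num_den D p = Max (insert 1 ((\<lambda>t. fst (quotient_of (p t))) ` D \<union> (\<lambda>t. snd (quotient_of (p t))) ` D))"

end

(*
  The models of a probabilistic database are the nonnegative solutions M of the linear system
  sum_w M w = 1 and sum_{w containing u} M w = p u (u in D), with one unknown M w for every
  possible world w, and p^M_Q(t) is a linear function of M.  As in linear programming, every model
  can be moved, without increasing (or without decreasing) p^M_Q(t), to a basic model: one whose
  support has linearly independent columns.  A basic model is determined by its support, so there
  are finitely many of them, and the minimum and the maximum over all models are attained at basic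
  models.  Multiplying the equation of u by the denominator of p u makes the system integral with
  coefficients of absolute value at most a.  Cramer's rule on a nonsingular square row-submatrix
  of the support columns then gives all M w, and hence p^M_Q(t), which lies in [0,1], a common
  denominator of absolute value at most k! a^k, where k <= |D| + 1 is the size of the support;
  this is at most (m a)^m.
*)

theory Submission
  imports Defs "Jordan_Normal_Form.Matrix_Kernel"
begin

section \<open>Denominators of solutions of integral linear systems\<close>

lemma mat_kernel_trivialI:
  assumes "A \<in> carrier_mat nr nc"
    and "\<And>v. v \<in> carrier_vec nc \<Longrightarrow> A *\<^sub>v v = 0\<^sub>v nr \<Longrightarrow> v = 0\<^sub>v nc"
  shows "mat_kernel A = {0\<^sub>v nc}"
  using assms by (auto simp: mat_kernel)

lemma mat_kernel_trivialD:
  assumes "mat_kernel A = {0\<^sub>v nc}" "A \<in> carrier_mat nr nc"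
    and "v \<in> carrier_vec nc" "A *\<^sub>v v = 0\<^sub>v nr"
  shows "v = 0\<^sub>v nc"
  using assms mat_kernelI by blast

lemma wide_mat_nonzero_kernel_vec:
  fixes A :: "'a :: field mat"
  assumes A: "A \<in> carrier_mat nr nc" and wide: "nr < nc"
  obtains v where "v \<in> carrier_vec nc" "v \<noteq> 0\<^sub>v nc" "A *\<^sub>v v = 0\<^sub>v nr"
proof -
  define c where "c i = (if i < nr then row A i else 0\<^sub>v nc)" for i
  define P where "P = mat\<^sub>r nc nc (\<lambda>i. if i = nr then 0\<^sub>v nc else c i)"
  have P: "P \<in> carrier_mat nc nc" by (simp add: P_def)
  have "det P = 0"
    unfolding P_def using wide A by (intro det_row_0) (auto simp: c_def)
  then obtain v where v: "v \<in> carrier_vec nc" "v \<noteq> 0\<^sub>v nc" "P *\<^sub>v v = 0\<^sub>v nc"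
    using det_0_iff_vec_prod_zero_field[OF P] by auto
  have "A *\<^sub>v v = 0\<^sub>v nr"
  proof (rule eq_vecI)
    fix i assume "i < dim_vec (0\<^sub>v nr :: 'a vec)"
    then have i: "i < nr" by simp
    have "(A *\<^sub>v v) $ i = (P *\<^sub>v v) $ i"
      using i wide A P by (simp add: P_def c_def)
    then show "(A *\<^sub>v v) $ i = 0\<^sub>v nr $ i" using v(3) i wide by simp
  qed (use A in simp)
  then show thesis using that v(1,2) by blast
qed

lemma mat_kernel_trivial_imp_le:
  fixes A :: "'a :: field mat"
  assumes "A \<in> carrier_mat nr nc" "mat_kernel A = {0\<^sub>v nc}"
  shows "nc \<le> nr"
proof (rule ccontr)
  assume "\<not> nc \<le> nr"
  then have "nr < nc" by simp
  then obtain v where "v \<in> carrier_vec nc" "v \<noteq> 0\<^sub>v nc" "A *\<^sub>v v = 0\<^sub>v nr"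
    by (rule wide_mat_nonzero_kernel_vec[OF assms(1)])
  then show False using mat_kernel_trivialD[OF assms(2,1)] by blast
qed

definition select_rows :: "'a mat \<Rightarrow> nat \<Rightarrow> (nat \<Rightarrow> nat) \<Rightarrow> 'a mat" where
  "select_rows A n f = mat n (dim_col A) (\<lambda>(i, j). A $$ (f i, j))"

lemma dim_select_rows [simp]:
  "dim_row (select_rows A n f) = n" "dim_col (select_rows A n f) = dim_col A"
  by (simp_all add: select_rows_def)

lemma select_rows_id:
  assumes "A \<in> carrier_mat n nc"
  shows "select_rows A n id = A"
  using assms by (auto simp: select_rows_def)

lemma select_rows_select_rows:
  assumes "\<forall>i<n'. g i < n"
  shows "select_rows (select_rows A n f) n' g = select_rows A n' (f \<circ> g)"
  using assms by (auto simp: select_rows_def)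

lemma index_select_rows_mult_vec:
  assumes "i < n" "f i < dim_row A" "v \<in> carrier_vec (dim_col A)"
  shows "(select_rows A n f *\<^sub>v v) $ i = (A *\<^sub>v v) $ f i"
proof -
  have "row (select_rows A n f) i = row A (f i)"
    using assms by (auto simp: select_rows_def)
  then show ?thesis using assms(1,2) by simp
qed

lemma mult_mat_vec_eq_0_from_other_rows:
  fixes A :: "'a :: field mat"
  assumes A: "A \<in> carrier_mat nr nc" and v: "v \<in> carrier_vec nc"
    and c: "c \<in> carrier_vec nr" "transpose_mat A *\<^sub>v c = 0\<^sub>v nc" "i0 < nr" "c $ i0 \<noteq> 0"
    and other: "\<And>i. i < nr \<Longrightarrow> i \<noteq> i0 \<Longrightarrow> (A *\<^sub>v v) $ i = 0"
  shows "A *\<^sub>v v = 0\<^sub>v nr"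
proof -
  have "c \<bullet> (A *\<^sub>v v) = (transpose_mat A *\<^sub>v c) \<bullet> v"
    by (rule transpose_vec_mult_scalar[OF A v c(1), symmetric])
  also have "\<dots> = 0" using c(2) v by simp
  finally have "c \<bullet> (A *\<^sub>v v) = 0" .
  moreover have "c \<bullet> (A *\<^sub>v v) = (\<Sum>i\<in>{0..<nr}. c $ i * (A *\<^sub>v v) $ i)"
    using A by (simp add: scalar_prod_def)
  moreover have "\<dots> = c $ i0 * (A *\<^sub>v v) $ i0"
  proof -
    have "(\<Sum>i\<in>{0..<nr} - {i0}. c $ i * (A *\<^sub>v v) $ i) = 0"
      using other by (intro sum.neutral) auto
    then show ?thesis using c(3) by (subst sum.remove[of _ i0]) auto
  qed
  ultimately have "(A *\<^sub>v v) $ i0 = 0" using c(4) by simp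
  show "A *\<^sub>v v = 0\<^sub>v nr"
  proof (rule eq_vecI)
    fix i assume "i < dim_vec (0\<^sub>v nr :: 'a vec)"
    then show "(A *\<^sub>v v) $ i = 0\<^sub>v nr $ i"
      using other \<open>(A *\<^sub>v v) $ i0 = 0\<close> by (cases "i = i0") auto
  qed (use A in simp)
qed

lemma mat_kernel_trivial_delete_row:
  fixes A :: "'a :: field mat"
  assumes A: "A \<in> carrier_mat (Suc r) nc" and ker: "mat_kernel A = {0\<^sub>v nc}"
    and tall: "nc < Suc r"
  obtains f where "\<forall>i<r. f i < Suc r" "mat_kernel (select_rows A r f) = {0\<^sub>v nc}"
proof -
  obtain c where c: "c \<in> carrier_vec (Suc r)" "c \<noteq> 0\<^sub>v (Suc r)" "transpose_mat A *\<^sub>v c = 0\<^sub>v nc"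
    using wide_mat_nonzero_kernel_vec[of "transpose_mat A" nc "Suc r"] A tall by auto
  have "\<exists>i0<Suc r. c $ i0 \<noteq> 0"
  proof (rule ccontr)
    assume "\<not> ?thesis"
    then have "c = 0\<^sub>v (Suc r)" using c(1) by (intro eq_vecI) auto
    with c(2) show False by simp
  qed
  then obtain i0 where i0: "i0 < Suc r" "c $ i0 \<noteq> 0" by blast
  define f where "f i = (if i < i0 then i else Suc i)" for i
  have f: "\<forall>i<r. f i < Suc r" by (simp add: f_def)
  have A': "select_rows A r f \<in> carrier_mat r nc" using A by (intro carrier_matI) auto
  have "mat_kernel (select_rows A r f) = {0\<^sub>v nc}"
  proof (rule mat_kernel_trivialI[OF A'])
    fix v assume v: "v \<in> carrier_vec nc" and Av: "select_rows A r f *\<^sub>v v = 0\<^sub>v r"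
    have "(A *\<^sub>v v) $ i = 0" if "i < Suc r" "i \<noteq> i0" for i
    proof -
      define j where "j = (if i < i0 then i else i - 1)"
      have j: "j < r" "f j = i" using that i0(1) by (auto simp: j_def f_def split: if_splits)
      have "(select_rows A r f *\<^sub>v v) $ j = (A *\<^sub>v v) $ f j"
        by (rule index_select_rows_mult_vec) (use j that(1) A v in auto)
      then show ?thesis using Av j by simp
    qed
    then have "A *\<^sub>v v = 0\<^sub>v (Suc r)"
      by (rule mult_mat_vec_eq_0_from_other_rows[OF A v c(1,3) i0])
    then show "v = 0\<^sub>v nc" using mat_kernel_trivialD[OF ker A v] by blast
  qed
  with f show thesis by (rule that)
qed

lemma mat_kernel_trivial_square_row_submatrix:
  fixes A :: "'a :: field mat"
  assumes "A \<in> carrier_mat nr nc" "mat_kernel A = {0\<^sub>v nc}"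
  obtains f where "\<forall>i<nc. f i < nr" "mat_kernel (select_rows A nc f) = {0\<^sub>v nc}"
  using assms
proof (induction nr arbitrary: A thesis)
  case 0
  have "nc = 0" using mat_kernel_trivial_imp_le[OF "0.prems"(2,3)] by simp
  show ?case
  proof (rule "0.prems"(1)[of id])
    show "\<forall>i<nc. id i < 0" using \<open>nc = 0\<close> by simp
    show "mat_kernel (select_rows A nc id) = {0\<^sub>v nc}"
      using select_rows_id[OF "0.prems"(2)] "0.prems"(3) \<open>nc = 0\<close> by simp
  qed
next
  case (Suc r)
  show ?case
  proof (cases "nc = Suc r")
    case True
    show ?thesis
    proof (rule Suc.prems(1)[of id])
      show "\<forall>i<nc. id i < Suc r" using True by simp
      show "mat_kernel (select_rows A nc id) = {0\<^sub>v nc}"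
        using select_rows_id[OF Suc.prems(2)] Suc.prems(3) True by simp
    qed
  next
    case False
    then have "nc < Suc r" using mat_kernel_trivial_imp_le[OF Suc.prems(2,3)] by simp
    then obtain g where g: "\<forall>i<r. g i < Suc r" "mat_kernel (select_rows A r g) = {0\<^sub>v nc}"
      by (rule mat_kernel_trivial_delete_row[OF Suc.prems(2,3)])
    have Ag: "select_rows A r g \<in> carrier_mat r nc" using Suc.prems(2) by (intro carrier_matI) auto
    obtain h where h: "\<forall>i<nc. h i < r"
        "mat_kernel (select_rows (select_rows A r g) nc h) = {0\<^sub>v nc}"
      using Suc.IH[OF _ Ag g(2)] by blast
    show ?thesis
    proof (rule Suc.prems(1)[of "g \<circ> h"])
      show "\<forall>i<nc. (g \<circ> h) i < Suc r" using g(1) h(1) by simp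
      show "mat_kernel (select_rows A nc (g \<circ> h)) = {0\<^sub>v nc}"
        using h(2) unfolding select_rows_select_rows[OF h(1)] .
    qed
  qed
qed

lemma det_Ints:
  fixes A :: "'a :: comm_ring_1 mat"
  assumes A: "A \<in> carrier_mat n n" and ent: "\<And>i j. i < n \<Longrightarrow> j < n \<Longrightarrow> A $$ (i, j) \<in> \<int>"
  shows "det A \<in> \<int>"
proof -
  have "p i < n" if "p permutes {0..<n}" "i < n" for p i
    using that permutes_in_image by fastforce
  then show ?thesis
    unfolding det_def'[OF A] by (intro Ints_sum Ints_mult Ints_prod) (auto simp: ent)
qed

lemma abs_det_le:
  fixes A :: "'a :: linordered_idom mat"
  assumes A: "A \<in> carrier_mat n n" and ent: "\<And>i j. i < n \<Longrightarrow> j < n \<Longrightarrow> \<bar>A $$ (i, j)\<bar> \<le> B"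
  shows "\<bar>det A\<bar> \<le> fact n * B ^ n"
proof -
  let ?P = "{p. p permutes {0..<n}}"
  have "\<bar>det A\<bar> \<le> (\<Sum>p\<in>?P. \<bar>signof p * (\<Prod>i = 0..<n. A $$ (i, p i))\<bar>)"
    unfolding det_def'[OF A] by (rule sum_abs)
  also have "\<dots> \<le> (\<Sum>p\<in>?P. B ^ n)"
  proof (rule sum_mono)
    fix p assume p: "p \<in> ?P"
    then have "p i < n" if "i < n" for i
      using that permutes_in_image by fastforce
    then have "(\<Prod>i = 0..<n. \<bar>A $$ (i, p i)\<bar>) \<le> (\<Prod>i = 0..<n. B)"
      by (intro prod_mono) (auto simp: ent)
    moreover have "\<bar>signof p * (\<Prod>i = 0..<n. A $$ (i, p i))\<bar> = (\<Prod>i = 0..<n. \<bar>A $$ (i, p i)\<bar>)"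
      by (cases "sign p = (1::int)") (auto simp: abs_mult abs_prod sign_def)
    ultimately show "\<bar>signof p * (\<Prod>i = 0..<n. A $$ (i, p i))\<bar> \<le> B ^ n" by simp
  qed
  also have "\<dots> = fact n * B ^ n"
    by (simp add: card_permutations)
  finally show ?thesis .
qed

lemma det_nonzero_if_mat_kernel_trivial:
  fixes A :: "'a :: field mat"
  assumes A: "A \<in> carrier_mat n n" and ker: "mat_kernel A = {0\<^sub>v n}"
  shows "det A \<noteq> 0"
  using det_0_iff_vec_prod_zero_field[OF A] mat_kernel_trivialD[OF ker A] by blast

lemma det_mult_solution_Ints:
  fixes A :: "'a :: field mat"
  assumes A: "A \<in> carrier_mat n n" and x: "x \<in> carrier_vec n"
    and ent: "\<And>i j. i < n \<Longrightarrow> j < n \<Longrightarrow> A $$ (i, j) \<in> \<int>"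
    and b: "\<And>i. i < n \<Longrightarrow> (A *\<^sub>v x) $ i \<in> \<int>" and j: "j < n"
  shows "det A * x $ j \<in> \<int>"
proof -
  have "det A * x $ j = det (replace_col A (A *\<^sub>v x) j)"
    using cramer_lemma_mat[OF A x j] by simp
  also have "\<dots> \<in> \<int>"
    by (rule det_Ints) (use A ent b in \<open>auto simp: replace_col_def\<close>)
  finally show ?thesis .
qed

lemma mat_kernel_trivial_common_denominator:
  fixes A :: "'a :: linordered_field mat"
  assumes A: "A \<in> carrier_mat nr nc" and x: "x \<in> carrier_vec nc" and ker: "mat_kernel A = {0\<^sub>v nc}"
    and ent: "\<And>i j. i < nr \<Longrightarrow> j < nc \<Longrightarrow> A $$ (i, j) \<in> \<int> \<and> \<bar>A $$ (i, j)\<bar> \<le> B"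
    and b: "\<And>i. i < nr \<Longrightarrow> (A *\<^sub>v x) $ i \<in> \<int>"
  obtains d where "d \<in> \<int>" "d \<noteq> 0" "\<bar>d\<bar> \<le> fact nc * B ^ nc" "\<forall>j<nc. d * x $ j \<in> \<int>"
proof -
  obtain f where f: "\<forall>i<nc. f i < nr" and ker': "mat_kernel (select_rows A nc f) = {0\<^sub>v nc}"
    using mat_kernel_trivial_square_row_submatrix[OF A ker] by blast
  define A' where "A' = select_rows A nc f"
  have A': "A' \<in> carrier_mat nc nc" using A by (auto simp: A'_def intro!: carrier_matI)
  have ent': "A' $$ (i, j) \<in> \<int> \<and> \<bar>A' $$ (i, j)\<bar> \<le> B" if "i < nc" "j < nc" for i j
    using ent[of "f i" j] f that A by (simp add: A'_def select_rows_def)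
  have b': "(A' *\<^sub>v x) $ i \<in> \<int>" if "i < nc" for i
    using index_select_rows_mult_vec[of i nc f A x] b[of "f i"] f that A x by (simp add: A'_def)
  show thesis
  proof (rule that)
    show "det A' \<in> \<int>" using det_Ints[OF A'] ent' by blast
    show "det A' \<noteq> 0" using det_nonzero_if_mat_kernel_trivial[OF A'] ker' by (simp add: A'_def)
    show "\<bar>det A'\<bar> \<le> fact nc * B ^ nc" using abs_det_le[OF A'] ent' by blast
    show "\<forall>j<nc. det A' * x $ j \<in> \<int>" using det_mult_solution_Ints[OF A' x] ent' b' by blast
  qed
qed

definition independent_columns :: "'c set \<Rightarrow> ('c \<Rightarrow> 'i \<Rightarrow> 'a :: field) \<Rightarrow> 'i set \<Rightarrow> bool" where
  "independent_columns C a S \<longleftrightarrow> (\<forall>f. (\<forall>c\<in>C. (\<Sum>w\<in>S. a c w * f w) = 0) \<longrightarrow> (\<forall>w\<in>S. f w = 0))"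

lemma independent_columnsD:
  assumes "independent_columns C a S" "\<forall>c\<in>C. (\<Sum>w\<in>S. a c w * f w) = 0" "w \<in> S"
  shows "f w = 0"
  using assms unfolding independent_columns_def by blast

lemma independent_columns_scale_rows:
  assumes "\<forall>c\<in>C. s c \<noteq> 0"
  shows "independent_columns C (\<lambda>c w. s c * a c w) S \<longleftrightarrow> independent_columns C a S"
  using assms by (simp add: independent_columns_def mult.assoc flip: sum_distrib_left)

lemma independent_columns_solution_unique:
  assumes "independent_columns C a S"
    and "\<forall>c\<in>C. (\<Sum>w\<in>S. a c w * x w) = (\<Sum>w\<in>S. a c w * y w)" and "w \<in> S"
  shows "x w = y w"
proof -
  have "\<forall>c\<in>C. (\<Sum>w\<in>S. a c w * (x w - y w)) = 0"
    using assms(2) by (simp add: right_diff_distrib sum_subtractf)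
  from independent_columnsD[OF assms(1) this assms(3)] show ?thesis by simp
qed

definition coeff_mat :: "('c \<Rightarrow> 'i \<Rightarrow> 'a) \<Rightarrow> (nat \<Rightarrow> 'c) \<Rightarrow> (nat \<Rightarrow> 'i) \<Rightarrow> nat \<Rightarrow> nat \<Rightarrow> 'a mat" where
  "coeff_mat a hc hs r k = mat r k (\<lambda>(i, j). a (hc i) (hs j))"

lemma coeff_mat_mult_vec:
  fixes a :: "'c \<Rightarrow> 'i \<Rightarrow> 'a :: semiring_0"
  assumes hs: "bij_betw hs {0..<k} S" and "i < r" "v \<in> carrier_vec k"
  shows "(coeff_mat a hc hs r k *\<^sub>v v) $ i = (\<Sum>w\<in>S. a (hc i) w * v $ the_inv_into {0..<k} hs w)"
proof -
  let ?ix = "the_inv_into {0..<k} hs"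
  have "(coeff_mat a hc hs r k *\<^sub>v v) $ i = (\<Sum>j\<in>{0..<k}. a (hc i) (hs j) * v $ j)"
    using assms(2,3) by (simp add: coeff_mat_def scalar_prod_def)
  also have "\<dots> = (\<Sum>w\<in>S. a (hc i) (hs (?ix w)) * v $ ?ix w)"
    by (rule sum.reindex_bij_betw[OF bij_betw_the_inv_into[OF hs], symmetric])
  also have "\<dots> = (\<Sum>w\<in>S. a (hc i) w * v $ ?ix w)"
    using hs by (intro sum.cong) (simp_all add: bij_betw_def f_the_inv_into_f)
  finally show ?thesis .
qed

lemma mat_kernel_coeff_mat:
  fixes a :: "'c \<Rightarrow> 'i \<Rightarrow> 'a :: field"
  assumes hc: "bij_betw hc {0..<card C} C" and hs: "bij_betw hs {0..<card S} S"
    and ind: "independent_columns C a S"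
  shows "mat_kernel (coeff_mat a hc hs (card C) (card S)) = {0\<^sub>v (card S)}"
proof -
  let ?A = "coeff_mat a hc hs (card C) (card S)" and ?ix = "the_inv_into {0..<card S} hs"
  have A: "?A \<in> carrier_mat (card C) (card S)" by (simp add: coeff_mat_def)
  show ?thesis
  proof (rule mat_kernel_trivialI[OF A])
    fix v assume v: "v \<in> carrier_vec (card S)" and Av: "?A *\<^sub>v v = 0\<^sub>v (card C)"
    have kv: "\<forall>c\<in>C. (\<Sum>w\<in>S. a c w * v $ ?ix w) = 0"
    proof
      fix c assume "c \<in> C"
      then have "c \<in> hc ` {0..<card C}" using hc by (simp add: bij_betw_def)
      then obtain i where "i < card C" "c = hc i" by auto
      then show "(\<Sum>w\<in>S. a c w * v $ ?ix w) = 0"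
        using coeff_mat_mult_vec[where a = a and hc = hc, OF hs \<open>i < card C\<close> v] Av by simp
    qed
    have "v $ ?ix (hs j) = 0" if "j < card S" for j
      by (rule independent_columnsD[OF ind kv]) (use bij_betwE[OF hs] that in auto)
    then show "v = 0\<^sub>v (card S)"
      using v hs by (intro eq_vecI) (auto simp: bij_betw_def the_inv_into_f_f)
  qed
qed

lemma independent_columns_common_denominator:
  fixes a :: "'c \<Rightarrow> 'i \<Rightarrow> 'a :: linordered_field"
  assumes C: "finite C" and S: "finite S" and ind: "independent_columns C a S"
    and ent: "\<And>c w. c \<in> C \<Longrightarrow> w \<in> S \<Longrightarrow> a c w \<in> \<int> \<and> \<bar>a c w\<bar> \<le> B"
    and b: "\<And>c. c \<in> C \<Longrightarrow> (\<Sum>w\<in>S. a c w * x w) \<in> \<int>"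
  shows "card S \<le> card C"
    and "\<exists>d\<in>\<int>. d \<noteq> 0 \<and> \<bar>d\<bar> \<le> fact (card S) * B ^ card S \<and> (\<forall>w\<in>S. d * x w \<in> \<int>)"
proof -
  obtain hc where hc: "bij_betw hc {0..<card C} C" using ex_bij_betw_nat_finite[OF C] by blast
  obtain hs where hs: "bij_betw hs {0..<card S} S" using ex_bij_betw_nat_finite[OF S] by blast
  let ?A = "coeff_mat a hc hs (card C) (card S)" and ?ix = "the_inv_into {0..<card S} hs"
  have A: "?A \<in> carrier_mat (card C) (card S)" by (simp add: coeff_mat_def)
  have ker: "mat_kernel ?A = {0\<^sub>v (card S)}" by (rule mat_kernel_coeff_mat[OF hc hs ind])
  show "card S \<le> card C" by (rule mat_kernel_trivial_imp_le[OF A ker])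
  define x' where "x' = vec (card S) (\<lambda>j. x (hs j))"
  have x': "x' \<in> carrier_vec (card S)" by (simp add: x'_def)
  have ix: "?ix w < card S" "x' $ ?ix w = x w" if "w \<in> S" for w
    using bij_betwE[OF bij_betw_the_inv_into[OF hs]] that hs
    by (auto simp: x'_def bij_betw_def f_the_inv_into_f)
  obtain d where "d \<in> \<int>" "d \<noteq> 0" "\<bar>d\<bar> \<le> fact (card S) * B ^ card S"
    "\<forall>j<card S. d * x' $ j \<in> \<int>"
  proof (rule mat_kernel_trivial_common_denominator[OF A x' ker])
    show "?A $$ (i, j) \<in> \<int> \<and> \<bar>?A $$ (i, j)\<bar> \<le> B" if "i < card C" "j < card S" for i j
      using that ent bij_betwE[OF hc] bij_betwE[OF hs] by (simp add: coeff_mat_def)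
    show "(?A *\<^sub>v x') $ i \<in> \<int>" if "i < card C" for i
      using coeff_mat_mult_vec[where a = a and hc = hc, OF hs that x'] b bij_betwE[OF hc] that ix
      by simp
  qed
  then show "\<exists>d\<in>\<int>. d \<noteq> 0 \<and> \<bar>d\<bar> \<le> fact (card S) * B ^ card S \<and> (\<forall>w\<in>S. d * x w \<in> \<int>)"
    using ix by metis
qed

section \<open>Nonnegative solutions with independent support\<close>

definition supp_on :: "'i set \<Rightarrow> ('i \<Rightarrow> 'a :: zero) \<Rightarrow> 'i set" where
  "supp_on I x = {w \<in> I. x w \<noteq> 0}"

lemma sum_supp_on:
  fixes x :: "'i \<Rightarrow> 'a :: semiring_0"
  assumes "finite I"
  shows "(\<Sum>w\<in>I. f w * x w) = (\<Sum>w\<in>supp_on I x. f w * x w)"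
  using assms by (intro sum.mono_neutral_right) (auto simp: supp_on_def)

lemma exists_neg_if_pos_weighted_sum_zero:
  fixes g :: "'i \<Rightarrow> 'a :: linordered_idom"
  assumes "finite S" "\<forall>w\<in>S. 0 < a w" "(\<Sum>w\<in>S. a w * g w) = 0" "w0 \<in> S" "g w0 \<noteq> 0"
  shows "\<exists>w\<in>S. g w < 0"
proof (rule ccontr)
  assume "\<not> ?thesis"
  then have "\<forall>w\<in>S. 0 \<le> g w" by (simp add: not_less)
  then have "\<forall>w\<in>S. 0 \<le> a w * g w" using assms(2) by (meson less_imp_le mult_nonneg_nonneg)
  with assms(3) have "\<forall>w\<in>S. a w * g w = 0" by (simp add: sum_nonneg_eq_0_iff[OF assms(1)])
  then show False using assms(2,4,5) by force
qed

lemma ratio_test: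
  fixes x g :: "'i \<Rightarrow> 'a :: linordered_field"
  assumes fin: "finite I" and x: "\<forall>w\<in>I. 0 \<le> x w" and neg: "\<exists>w\<in>I. g w < 0"
  obtains t where "0 \<le> t" "\<forall>w\<in>I. 0 \<le> x w + t * g w" "\<exists>w\<in>I. g w < 0 \<and> x w + t * g w = 0"
proof -
  define T where "T = {w \<in> I. g w < 0}"
  define r where "r w = x w / - g w" for w
  define w0 where "w0 = arg_min_on r T"
  have T: "finite T" "T \<noteq> {}" using fin neg by (auto simp: T_def)
  have w0: "w0 \<in> T" "\<forall>w\<in>T. r w0 \<le> r w"
    using arg_min_if_finite[OF T, of r] by (auto simp: w0_def not_less)
  have "0 \<le> x w0" "0 < - g w0" using w0(1) x by (auto simp: T_def)
  then have r_nonneg: "0 \<le> r w0" unfolding r_def by (rule divide_nonneg_pos)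
  show thesis
  proof (rule that[OF r_nonneg])
    show "\<forall>w\<in>I. 0 \<le> x w + r w0 * g w"
    proof
      fix w assume w: "w \<in> I"
      show "0 \<le> x w + r w0 * g w"
      proof (cases "g w < 0")
        case True
        then have "r w0 \<le> x w / - g w" using w0(2) w by (auto simp: T_def r_def)
        moreover have "0 < - g w" using True by simp
        ultimately have "r w0 * - g w \<le> x w" by (simp only: pos_le_divide_eq)
        then show ?thesis by simp
      next
        case False
        then show ?thesis using x w r_nonneg by simp
      qed
    qed
    show "\<exists>w\<in>I. g w < 0 \<and> x w + r w0 * g w = 0"
      using w0(1) by (auto simp: T_def r_def)
  qed
qed

lemma dependent_columns_descent_direction:
  fixes \<phi> :: "'i \<Rightarrow> 'a :: linordered_field"
  assumes fin: "finite I" and S: "S \<subseteq> I" and dep: "\<not> independent_columns C a S"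
  obtains g w1 where "\<forall>c\<in>C. (\<Sum>w\<in>I. a c w * g w) = 0" "w1 \<in> S" "g w1 \<noteq> 0"
    "\<forall>w\<in>I - S. g w = 0" "(\<Sum>w\<in>I. \<phi> w * g w) \<le> 0"
proof -
  obtain f w1 where f: "\<forall>c\<in>C. (\<Sum>w\<in>S. a c w * f w) = 0" and w1: "w1 \<in> S" "f w1 \<noteq> 0"
    using dep unfolding independent_columns_def by blast
  define g where "g w = (if w \<in> S then f w else 0)" for w
  have sum_g: "(\<Sum>w\<in>I. h w * g w) = (\<Sum>w\<in>S. h w * f w)" for h
  proof -
    have "(\<Sum>w\<in>I. h w * g w) = (\<Sum>w\<in>S. h w * g w)"
      using fin S by (intro sum.mono_neutral_right) (auto simp: g_def)
    also have "\<dots> = (\<Sum>w\<in>S. h w * f w)" by (simp add: g_def)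
    finally show ?thesis .
  qed
  have g: "\<forall>c\<in>C. (\<Sum>w\<in>I. a c w * g w) = 0" "g w1 \<noteq> 0" "\<forall>w\<in>I - S. g w = 0"
    using f w1 unfolding sum_g by (simp_all add: g_def)
  show thesis
  proof (cases "(\<Sum>w\<in>I. \<phi> w * g w) \<le> 0")
    case True
    then show thesis by (rule that[OF g(1) w1(1) g(2,3)])
  next
    case False
    then show thesis using g w1(1) by (intro that[of "\<lambda>w. - g w" w1]) (simp_all add: sum_negf)
  qed
qed

lemma reduce_dependent_support:
  fixes x :: "'i \<Rightarrow> 'a :: linordered_field"
  assumes fin: "finite I" and norm: "c_norm \<in> C" "\<forall>w\<in>I. 0 < a c_norm w"
    and x: "\<forall>w\<in>I. 0 \<le> x w" and dep: "\<not> independent_columns C a (supp_on I x)"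
  obtains y where "\<forall>w\<in>I. 0 \<le> y w" "supp_on I y \<subset> supp_on I x"
    "\<forall>c\<in>C. (\<Sum>w\<in>I. a c w * y w) = (\<Sum>w\<in>I. a c w * x w)"
    "(\<Sum>w\<in>I. \<phi> w * y w) \<le> (\<Sum>w\<in>I. \<phi> w * x w)"
proof -
  let ?S = "supp_on I x"
  have S: "?S \<subseteq> I" by (auto simp: supp_on_def)
  obtain g w1 where g: "\<forall>c\<in>C. (\<Sum>w\<in>I. a c w * g w) = 0" "w1 \<in> ?S" "g w1 \<noteq> 0"
    "\<forall>w\<in>I - ?S. g w = 0" "(\<Sum>w\<in>I. \<phi> w * g w) \<le> 0"
    by (rule dependent_columns_descent_direction[OF fin S dep])
  have "w1 \<in> I" using g(2) S by blast
  \<comment> \<open>the positive row \<open>c_norm\<close> bounds the feasible region, so \<open>g\<close> must have a negative entry\<close>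
  then have "\<exists>w\<in>I. g w < 0"
    using exists_neg_if_pos_weighted_sum_zero[OF fin norm(2) g(1)[rule_format, OF norm(1)] _ g(3)]
    by blast
  then obtain t where t: "0 \<le> t" "\<forall>w\<in>I. 0 \<le> x w + t * g w"
    and "\<exists>w\<in>I. g w < 0 \<and> x w + t * g w = 0"
    by (rule ratio_test[OF fin x])
  then obtain w2 where w2: "w2 \<in> I" "g w2 < 0" "x w2 + t * g w2 = 0" by blast
  have "w2 \<in> ?S"
  proof (rule ccontr)
    assume "w2 \<notin> ?S"
    then have "g w2 = 0" using g(4) w2(1) by blast
    with w2(2) show False by simp
  qed
  define y where "y w = x w + t * g w" for w
  have lin: "(\<Sum>w\<in>I. h w * y w) = (\<Sum>w\<in>I. h w * x w) + t * (\<Sum>w\<in>I. h w * g w)" for h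
    by (simp add: y_def algebra_simps sum.distrib sum_distrib_left)
  show thesis
  proof (rule that)
    show "\<forall>w\<in>I. 0 \<le> y w" using t(2) by (simp add: y_def)
    have "supp_on I y \<subseteq> ?S" using g(4) by (auto simp: supp_on_def y_def)
    moreover have "w2 \<notin> supp_on I y" using w2(3) by (simp add: supp_on_def y_def)
    ultimately show "supp_on I y \<subset> ?S" using \<open>w2 \<in> ?S\<close> by blast
    show "\<forall>c\<in>C. (\<Sum>w\<in>I. a c w * y w) = (\<Sum>w\<in>I. a c w * x w)" using g(1) by (simp add: lin)
    show "(\<Sum>w\<in>I. \<phi> w * y w) \<le> (\<Sum>w\<in>I. \<phi> w * x w)"
      using g(5) t(1) by (simp add: lin mult_nonneg_nonpos)
  qed
qed

lemma exists_solution_independent_support: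
  fixes x :: "'i \<Rightarrow> 'a :: linordered_field"
  assumes fin: "finite I" and norm: "c_norm \<in> C" "\<forall>w\<in>I. 0 < a c_norm w" and x: "\<forall>w\<in>I. 0 \<le> x w"
  shows "\<exists>y. (\<forall>w\<in>I. 0 \<le> y w) \<and> supp_on I y \<subseteq> supp_on I x \<and>
    (\<forall>c\<in>C. (\<Sum>w\<in>I. a c w * y w) = (\<Sum>w\<in>I. a c w * x w)) \<and>
    (\<Sum>w\<in>I. \<phi> w * y w) \<le> (\<Sum>w\<in>I. \<phi> w * x w) \<and>
    independent_columns C a (supp_on I y)"
  using x
proof (induction "card (supp_on I x)" arbitrary: x rule: less_induct)
  case less
  show ?case
  proof (cases "independent_columns C a (supp_on I x)")
    case True
    with less.prems show ?thesis by (intro exI[of _ x]) simp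
  next
    case False
    obtain y where y: "\<forall>w\<in>I. 0 \<le> y w" "supp_on I y \<subset> supp_on I x"
      "\<forall>c\<in>C. (\<Sum>w\<in>I. a c w * y w) = (\<Sum>w\<in>I. a c w * x w)"
      "(\<Sum>w\<in>I. \<phi> w * y w) \<le> (\<Sum>w\<in>I. \<phi> w * x w)"
      by (rule reduce_dependent_support[OF fin norm less.prems False])
    have "finite (supp_on I x)" using fin by (simp add: supp_on_def)
    then have "card (supp_on I y) < card (supp_on I x)" using y(2) by (rule psubset_card_mono)
    then obtain z where z: "\<forall>w\<in>I. 0 \<le> z w" "supp_on I z \<subseteq> supp_on I y"
      "\<forall>c\<in>C. (\<Sum>w\<in>I. a c w * z w) = (\<Sum>w\<in>I. a c w * y w)"
      "(\<Sum>w\<in>I. \<phi> w * z w) \<le> (\<Sum>w\<in>I. \<phi> w * y w)"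
      "independent_columns C a (supp_on I z)"
      using less.hyps y(1) by blast
    show ?thesis
    proof (intro exI[of _ z] conjI)
      show "supp_on I z \<subseteq> supp_on I x" using z(2) y(2) by blast
      show "\<forall>c\<in>C. (\<Sum>w\<in>I. a c w * z w) = (\<Sum>w\<in>I. a c w * x w)" using z(3) y(3) by simp
      show "(\<Sum>w\<in>I. \<phi> w * z w) \<le> (\<Sum>w\<in>I. \<phi> w * x w)" using z(4) y(4) by simp
    qed (use z in simp_all)
  qed
qed

section \<open>Basic models\<close>

text \<open>The constraints on an interpretation as a linear system in the unknowns \<open>M w\<close>, \<open>w \<subseteq> D\<close>:
  row \<open>None\<close> is the normalisation \<open>\<Sum>w. M w = 1\<close>, row \<open>Some u\<close> the marginal constraint of \<open>u\<close>.\<close>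

definition pdb_coeff :: "('r, 'c) fact option \<Rightarrow> ('r, 'c) fact set \<Rightarrow> real" where
  "pdb_coeff c w = (case c of None \<Rightarrow> 1 | Some u \<Rightarrow> of_bool (u \<in> w))"

definition pdb_rhs :: "(('r, 'c) fact \<Rightarrow> rat) \<Rightarrow> ('r, 'c) fact option \<Rightarrow> real" where
  "pdb_rhs p c = (case c of None \<Rightarrow> 1 | Some u \<Rightarrow> real_of_rat (p u))"

lemma sum_of_bool_mult:
  fixes M :: "'i \<Rightarrow> 'a :: semiring_1"
  assumes "finite I"
  shows "(\<Sum>w\<in>I. of_bool (P w) * M w) = (\<Sum>w\<in>{w\<in>I. P w}. M w)"
  by (subst sum.inter_filter[OF assms]) (intro sum.cong, auto)

lemma pdb_interp_iff_constraints:
  assumes "finite D"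
  shows "pdb_interp D p M \<longleftrightarrow> (\<forall>w\<in>Pow D. 0 \<le> M w) \<and>
    (\<forall>c\<in>insert None (Some ` D). (\<Sum>w\<in>Pow D. pdb_coeff c w * M w) = pdb_rhs p c)"
proof -
  have coeff: "pdb_coeff (Some u) w = of_bool (u \<in> w)" "pdb_coeff None w = 1" for u w
    by (simp_all add: pdb_coeff_def)
  have "(\<Sum>w\<in>Pow D. pdb_coeff (Some u) w * M w) = (\<Sum>w\<in>{w\<in>Pow D. u \<in> w}. M w)" for u
    unfolding coeff(1) by (rule sum_of_bool_mult) (simp add: assms)
  moreover have "(\<Sum>w\<in>Pow D. pdb_coeff None w * M w) = (\<Sum>w\<in>Pow D. M w)"
    unfolding coeff(2) by simp
  ultimately show ?thesis by (simp add: pdb_interp_def pdb_rhs_def)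
qed

definition is_basic_model ::
  "('r, 'c::linorder) fact set \<Rightarrow> (('r, 'c) fact \<Rightarrow> rat) \<Rightarrow> ('r, 'v, 'c) denial set
     \<Rightarrow> (('r, 'c) fact set \<Rightarrow> real) \<Rightarrow> bool" where
  "is_basic_model D p IC M \<longleftrightarrow>
     is_model D p IC M \<and> independent_columns (insert None (Some ` D)) pdb_coeff (supp_on (Pow D) M)"

lemma exists_basic_model:
  assumes fin: "finite D" and M: "is_model D p IC M"
  obtains M' where "is_basic_model D p IC M'"
    "(\<Sum>w\<in>Pow D. \<phi> w * M' w) \<le> (\<Sum>w\<in>Pow D. \<phi> w * M w)"
proof -
  let ?C = "insert None (Some ` D)"
  have nonneg: "\<forall>w\<in>Pow D. 0 \<le> M w"
    and eqs: "\<forall>c\<in>?C. (\<Sum>w\<in>Pow D. pdb_coeff c w * M w) = pdb_rhs p c"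
    using M by (simp_all add: is_model_def pdb_interp_iff_constraints[OF fin])
  have "\<forall>w\<in>Pow D. 0 < pdb_coeff None w" by (simp add: pdb_coeff_def)
  then obtain y where y: "\<forall>w\<in>Pow D. 0 \<le> y w" "supp_on (Pow D) y \<subseteq> supp_on (Pow D) M"
    "\<forall>c\<in>?C. (\<Sum>w\<in>Pow D. pdb_coeff c w * y w) = (\<Sum>w\<in>Pow D. pdb_coeff c w * M w)"
    "(\<Sum>w\<in>Pow D. \<phi> w * y w) \<le> (\<Sum>w\<in>Pow D. \<phi> w * M w)"
    "independent_columns ?C pdb_coeff (supp_on (Pow D) y)"
    using exists_solution_independent_support[where C = ?C and a = pdb_coeff and \<phi> = \<phi>,
        OF finite_Pow_iff[THEN iffD2, OF fin] insertI1 _ nonneg]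
    by blast
  have "is_model D p IC y"
    unfolding is_model_def pdb_interp_iff_constraints[OF fin]
  proof (intro conjI ballI impI)
    show "0 \<le> y w" if "w \<in> Pow D" for w using y(1) that by blast
    show "(\<Sum>w\<in>Pow D. pdb_coeff c w * y w) = pdb_rhs p c" if "c \<in> ?C" for c
      using y(3)[rule_format, OF that] eqs[rule_format, OF that] by simp
    show "y w = 0" if "w \<in> Pow D" "violates w IC" for w
      using M that y(2) by (auto simp: is_model_def supp_on_def)
  qed
  with y(4,5) show thesis by (intro that) (simp_all add: is_basic_model_def)
qed

lemma model_constraints_on_support:
  assumes fin: "finite D" and M: "is_model D p IC M" and c: "c \<in> insert None (Some ` D)"
  shows "(\<Sum>w\<in>supp_on (Pow D) M. pdb_coeff c w * M w) = pdb_rhs p c"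
proof -
  have "(\<Sum>w\<in>supp_on (Pow D) M. pdb_coeff c w * M w) = (\<Sum>w\<in>Pow D. pdb_coeff c w * M w)"
    by (rule sum_supp_on[symmetric]) (simp add: fin)
  also have "\<dots> = pdb_rhs p c"
    using M c unfolding is_model_def pdb_interp_iff_constraints[OF fin] by blast
  finally show ?thesis .
qed

lemma basic_model_unique:
  assumes fin: "finite D" and M1: "is_basic_model D p IC M1" and M2: "is_model D p IC M2"
    and supp: "supp_on (Pow D) M1 = supp_on (Pow D) M2" and w: "w \<in> Pow D"
  shows "M1 w = M2 w"
proof (cases "w \<in> supp_on (Pow D) M1")
  case True
  have "(\<Sum>w\<in>supp_on (Pow D) M1. pdb_coeff c w * M1 w) =
    (\<Sum>w\<in>supp_on (Pow D) M1. pdb_coeff c w * M2 w)" if "c \<in> insert None (Some ` D)" for c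
  proof -
    have "(\<Sum>w\<in>supp_on (Pow D) M1. pdb_coeff c w * M1 w) = pdb_rhs p c"
      using M1 unfolding is_basic_model_def by (blast intro: model_constraints_on_support[OF fin _ that])
    moreover have "(\<Sum>w\<in>supp_on (Pow D) M2. pdb_coeff c w * M2 w) = pdb_rhs p c"
      by (rule model_constraints_on_support[OF fin M2 that])
    ultimately show ?thesis by (simp add: supp)
  qed
  then show ?thesis
    using M1 True by (intro independent_columns_solution_unique) (auto simp: is_basic_model_def)
next
  case False
  then show ?thesis using supp w by (auto simp: supp_on_def)
qed

lemma finite_basic_model_objectives:
  assumes fin: "finite D"
  shows "finite {(\<Sum>w\<in>Pow D. \<phi> w * M w) | M. is_basic_model D p IC M}"
proof -
  define pick where "pick S = (SOME M. is_basic_model D p IC M \<and> supp_on (Pow D) M = S)" for S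
  have "{(\<Sum>w\<in>Pow D. \<phi> w * M w) | M. is_basic_model D p IC M}
      \<subseteq> (\<lambda>S. \<Sum>w\<in>Pow D. \<phi> w * pick S w) ` Pow (Pow D)"
  proof
    fix v assume "v \<in> {(\<Sum>w\<in>Pow D. \<phi> w * M w) | M. is_basic_model D p IC M}"
    then obtain M where v: "v = (\<Sum>w\<in>Pow D. \<phi> w * M w)" and M: "is_basic_model D p IC M"
      by blast
    let ?S = "supp_on (Pow D) M"
    have "is_basic_model D p IC (pick ?S) \<and> supp_on (Pow D) (pick ?S) = ?S"
      unfolding pick_def by (rule someI[of _ M]) (simp add: M)
    then have "M w = pick ?S w" if "w \<in> Pow D" for w
      using basic_model_unique[OF fin _ _ _ that] M by (metis is_basic_model_def)
    then have "v = (\<Sum>w\<in>Pow D. \<phi> w * pick ?S w)" unfolding v by simp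
    moreover have "?S \<in> Pow (Pow D)" by (auto simp: supp_on_def)
    ultimately show "v \<in> (\<lambda>S. \<Sum>w\<in>Pow D. \<phi> w * pick S w) ` Pow (Pow D)" by blast
  qed
  then show ?thesis by (rule finite_subset) (simp add: fin)
qed

lemma exists_optimal_basic_model:
  assumes fin: "finite D" and cons: "consistent D p IC"
  obtains M where "is_basic_model D p IC M"
    "\<And>M'. is_model D p IC M' \<Longrightarrow> (\<Sum>w\<in>Pow D. \<phi> w * M w) \<le> (\<Sum>w\<in>Pow D. \<phi> w * M' w)"
proof -
  let ?V = "{(\<Sum>w\<in>Pow D. \<phi> w * M w) | M. is_basic_model D p IC M}"
  have V: "finite ?V" by (rule finite_basic_model_objectives[OF fin])
  obtain M0 where "is_model D p IC M0" using cons by (auto simp: consistent_def)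
  then obtain M1 where "is_basic_model D p IC M1" by (rule exists_basic_model[OF fin])
  then have "?V \<noteq> {}" by blast
  with V have "Min ?V \<in> ?V" by (rule Min_in)
  then obtain M where M: "is_basic_model D p IC M" "(\<Sum>w\<in>Pow D. \<phi> w * M w) = Min ?V" by auto
  show thesis
  proof (rule that[OF M(1)])
    fix M' assume "is_model D p IC M'"
    then obtain M'' where M'': "is_basic_model D p IC M''"
      "(\<Sum>w\<in>Pow D. \<phi> w * M'' w) \<le> (\<Sum>w\<in>Pow D. \<phi> w * M' w)"
      by (rule exists_basic_model[OF fin])
    have "Min ?V \<le> (\<Sum>w\<in>Pow D. \<phi> w * M'' w)" using V M''(1) by (intro Min_le) auto
    with M(2) M''(2) show "(\<Sum>w\<in>Pow D. \<phi> w * M w) \<le> (\<Sum>w\<in>Pow D. \<phi> w * M' w)" by simp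
  qed
qed

lemma query_prob_eq_sum:
  assumes "finite D"
  shows "query_prob D M Q t = (\<Sum>w\<in>Pow D. of_bool (sat_query w Q t) * M w)"
  unfolding query_prob_def by (rule sum_of_bool_mult[symmetric]) (simp add: assms)

lemma exists_basic_model_min_query_prob:
  assumes fin: "finite D" and cons: "consistent D p IC"
  obtains M where "is_basic_model D p IC M" "\<forall>x\<in>model_probs D p IC Q t. query_prob D M Q t \<le> x"
proof -
  obtain M where M: "is_basic_model D p IC M" and opt: "\<And>M'. is_model D p IC M' \<Longrightarrow>
      (\<Sum>w\<in>Pow D. of_bool (sat_query w Q t) * M w) \<le> (\<Sum>w\<in>Pow D. of_bool (sat_query w Q t) * M' w)"
    using exists_optimal_basic_model[OF fin cons, where \<phi> = "\<lambda>w. of_bool (sat_query w Q t)"] by blast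
  show thesis
  proof (rule that[OF M], intro ballI)
    fix x assume "x \<in> model_probs D p IC Q t"
    then obtain M' where "is_model D p IC M'" "x = query_prob D M' Q t"
      by (auto simp: model_probs_def)
    then show "query_prob D M Q t \<le> x" using opt by (simp add: query_prob_eq_sum[OF fin])
  qed
qed

lemma exists_basic_model_max_query_prob:
  assumes fin: "finite D" and cons: "consistent D p IC"
  obtains M where "is_basic_model D p IC M" "\<forall>x\<in>model_probs D p IC Q t. x \<le> query_prob D M Q t"
proof -
  obtain M where M: "is_basic_model D p IC M" and opt: "\<And>M'. is_model D p IC M' \<Longrightarrow>
      (\<Sum>w\<in>Pow D. - of_bool (sat_query w Q t) * M w) \<le> (\<Sum>w\<in>Pow D. - of_bool (sat_query w Q t) * M' w)"
    using exists_optimal_basic_model[OF fin cons, where \<phi> = "\<lambda>w. - of_bool (sat_query w Q t)"] by blast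
  show thesis
  proof (rule that[OF M], intro ballI)
    fix x assume "x \<in> model_probs D p IC Q t"
    then obtain M' where "is_model D p IC M'" "x = query_prob D M' Q t"
      by (auto simp: model_probs_def)
    then show "x \<le> query_prob D M Q t" using opt by (simp add: query_prob_eq_sum[OF fin] sum_negf)
  qed
qed

section \<open>Bounds on the extreme query probabilities\<close>

lemma max_num_den_ge_1:
  assumes "finite D"
  shows "1 \<le> max_num_den D p"
  unfolding max_num_den_def using assms by (intro Max_ge) auto

lemma denom_le_max_num_den:
  assumes "finite D" "u \<in> D"
  shows "snd (quotient_of (p u)) \<le> max_num_den D p"
  unfolding max_num_den_def using assms by (intro Max_ge) auto

lemma fact_mult_power_le:
  fixes a :: real
  assumes k: "k \<le> m" and a: "1 \<le> a"
  shows "fact k * a ^ k \<le> (real m * a) ^ m"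
proof -
  have "fact k \<le> real k ^ k" using fact_le_power[of k, where 'a = real] by simp
  also have "\<dots> \<le> real m ^ k" using k by (intro power_mono) auto
  finally have "fact k * a ^ k \<le> (real m * a) ^ k"
    using a by (simp add: power_mult_distrib mult_right_mono)
  also have "\<dots> \<le> (real m * a) ^ m"
  proof (cases "m = 0")
    case True
    then show ?thesis using k by simp
  next
    case False
    then have "1 * 1 \<le> real m * a" using a by (intro mult_mono) auto
    then show ?thesis using k by (intro power_increasing) auto
  qed
  finally show ?thesis .
qed

lemma fraction_with_bounded_denominator:
  fixes q d :: real
  assumes q: "0 \<le> q" "q \<le> 1" and d: "d \<in> \<int>" "d \<noteq> 0" "d * q \<in> \<int>" "\<bar>d\<bar> \<le> of_int B"
  shows "\<exists>\<eta> \<delta> :: int. 0 \<le> \<eta> \<and> \<eta> \<le> B \<and> 0 < \<delta> \<and> \<delta> \<le> B \<and> q = of_int \<eta> / of_int \<delta>"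
proof -
  obtain \<delta> where \<delta>: "\<bar>d\<bar> = of_int \<delta>" using Ints_abs[OF d(1)] Ints_cases by blast
  have "\<bar>d\<bar> * q \<in> \<int>" using d(3) by (cases "0 \<le> d") (auto simp: minus_mult_left[symmetric])
  then obtain \<eta> where \<eta>: "\<bar>d\<bar> * q = of_int \<eta>" using Ints_cases by blast
  have "0 < \<delta>" using \<delta> d(2) by simp
  moreover have "0 \<le> \<eta>" using \<eta> q(1) by (metis abs_ge_zero mult_nonneg_nonneg of_int_0_le_iff)
  moreover have "\<eta> \<le> \<delta>"
    using \<eta> \<delta> q(2) by (metis abs_ge_zero mult_left_le of_int_le_iff)
  moreover have "\<delta> \<le> B" using \<delta> d(4) by simp
  moreover have "q = of_int \<eta> / of_int \<delta>" using \<eta> \<delta> d(2) by (simp add: field_simps)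
  ultimately show ?thesis by (intro exI[of _ \<eta>] exI[of _ \<delta>]) simp
qed

lemma query_prob_bounds:
  assumes "finite D" "is_model D p IC M"
  shows "0 \<le> query_prob D M Q t" "query_prob D M Q t \<le> 1"
proof -
  have M: "\<forall>w\<in>Pow D. 0 \<le> M w" "(\<Sum>w\<in>Pow D. M w) = 1"
    using assms(2) by (simp_all add: is_model_def pdb_interp_def)
  show "0 \<le> query_prob D M Q t" unfolding query_prob_def using M(1) by (intro sum_nonneg) auto
  have "query_prob D M Q t \<le> (\<Sum>w\<in>Pow D. M w)"
    unfolding query_prob_def using assms(1) M(1) by (intro sum_mono2) auto
  then show "query_prob D M Q t \<le> 1" using M(2) by simp
qed

lemma real_of_rat_eq_quotient_of:
  "real_of_rat r = of_int (fst (quotient_of r)) / of_int (snd (quotient_of r))"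
proof -
  obtain n d where nd: "quotient_of r = (n, d)" by (cases "quotient_of r")
  then have "r = of_int n / of_int d" by (rule quotient_of_div)
  then show ?thesis using nd by (simp add: of_rat_divide)
qed

lemma basic_model_common_denominator:
  fixes D :: "('r, 'c::linorder) fact set"
  assumes pdb: "pdb D p" and M: "is_basic_model D p IC M"
  obtains d where "d \<in> \<int>" "d \<noteq> 0"
    "\<bar>d\<bar> \<le> of_int ((int (card D + 3) * max_num_den D p) ^ (card D + 3))"
    "\<forall>w\<in>supp_on (Pow D) M. d * M w \<in> \<int>"
proof -
  let ?m = "card D + 3" and ?a = "max_num_den D p"
  let ?C = "insert None (Some ` D)" and ?S = "supp_on (Pow D) M"
  let ?den = "\<lambda>u. snd (quotient_of (p u))"
  have fin: "finite D" using pdb by (simp add: pdb_def)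
  have den_pos: "0 < ?den u" for u by (simp add: quotient_of_denom_pos')
  \<comment> \<open>scaling the marginal constraint of \<open>u\<close> by the denominator of \<open>p u\<close> makes it integral\<close>
  define s where "s c = (case c of None \<Rightarrow> 1 | Some u \<Rightarrow> real_of_int (?den u))" for c
  have "\<forall>c\<in>?C. s c \<noteq> 0" using den_pos by (auto simp: s_def less_imp_neq[symmetric])
  then have ind: "independent_columns ?C (\<lambda>c w. s c * pdb_coeff c w) ?S"
    using M by (simp add: is_basic_model_def independent_columns_scale_rows)
  have ent: "s c * pdb_coeff c w \<in> \<int> \<and> \<bar>s c * pdb_coeff c w\<bar> \<le> of_int ?a" if "c \<in> ?C" for c w
    using that max_num_den_ge_1[OF fin, of p] denom_le_max_num_den[OF fin, of _ p] den_pos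
    by (auto simp: s_def pdb_coeff_def abs_mult less_imp_le)
  have rhs: "(\<Sum>w\<in>?S. s c * pdb_coeff c w * M w) \<in> \<int>" if "c \<in> ?C" for c
  proof -
    have model: "is_model D p IC M" using M by (simp add: is_basic_model_def)
    have "(\<Sum>w\<in>?S. s c * pdb_coeff c w * M w) = s c * pdb_rhs p c"
      using model_constraints_on_support[OF fin model that]
      by (simp add: mult.assoc flip: sum_distrib_left)
    also have "\<dots> \<in> \<int>"
      using that den_pos
      by (auto simp: s_def pdb_rhs_def real_of_rat_eq_quotient_of less_imp_neq[symmetric])
    finally show ?thesis .
  qed
  have "finite ?S" using fin by (simp add: supp_on_def)
  then have "card ?S \<le> card ?C"
    and "\<exists>d\<in>\<int>. d \<noteq> 0 \<and> \<bar>d\<bar> \<le> fact (card ?S) * of_int ?a ^ card ?S \<and> (\<forall>w\<in>?S. d * M w \<in> \<int>)"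
    using independent_columns_common_denominator[OF _ _ ind ent, of M] rhs fin
    by (simp_all add: mult.assoc)
  moreover have "card ?C = Suc (card D)" using fin by (simp add: card_image)
  ultimately show thesis
    using that fact_mult_power_le[of "card ?S" ?m "of_int ?a"] max_num_den_ge_1[OF fin, of p]
    by fastforce
qed

lemma basic_model_query_prob_fraction:
  fixes D :: "('r, 'c::linorder) fact set"
  assumes pdb: "pdb D p" and M: "is_basic_model D p IC M"
  shows "\<exists>\<eta> \<delta> :: int. 0 \<le> \<eta> \<and> \<eta> \<le> (int (card D + 3) * max_num_den D p) ^ (card D + 3) \<and>
    0 < \<delta> \<and> \<delta> \<le> (int (card D + 3) * max_num_den D p) ^ (card D + 3) \<and>
    query_prob D M Q t = of_int \<eta> / of_int \<delta>"
proof -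
  have fin: "finite D" using pdb by (simp add: pdb_def)
  have model: "is_model D p IC M" using M by (simp add: is_basic_model_def)
  obtain d where d: "d \<in> \<int>" "d \<noteq> 0"
    "\<bar>d\<bar> \<le> of_int ((int (card D + 3) * max_num_den D p) ^ (card D + 3))"
    "\<forall>w\<in>supp_on (Pow D) M. d * M w \<in> \<int>"
    by (rule basic_model_common_denominator[OF pdb M])
  have "query_prob D M Q t = (\<Sum>w\<in>supp_on (Pow D) M. of_bool (sat_query w Q t) * M w)"
    unfolding query_prob_eq_sum[OF fin] by (rule sum_supp_on) (simp add: fin)
  then have "d * query_prob D M Q t \<in> \<int>"
    using d(4) by (simp add: sum_distrib_left mult.left_commute Ints_sum)
  then show ?thesis
    using fraction_with_bounded_denominator query_prob_bounds[OF fin model] d(1-3) by blast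
qed

theorem lemma2:
  fixes D :: "('r, 'c::linorder) fact set"
    and p :: "('r, 'c) fact \<Rightarrow> rat"
    and IC :: "('r, 'v, 'c) denial set"
    and Q :: "('r, 'v, 'c) cq"
    and t :: "'c list"
  assumes "pdb D p"
    and "consistent D p IC"
    and "is_answer D Q t"
  defines "m \<equiv> card D + 3"
    and "a \<equiv> max_num_den D p"
  shows "(\<exists>\<eta> \<delta> :: int. 0 \<le> \<eta> \<and> \<eta> \<le> (int m * a) ^ m \<and> 0 < \<delta> \<and> \<delta> \<le> (int m * a) ^ m \<and>
            real_of_int \<eta> / real_of_int \<delta> \<in> model_probs D p IC Q t \<and>
            (\<forall>x\<in>model_probs D p IC Q t. real_of_int \<eta> / real_of_int \<delta> \<le> x)) \<and>
         (\<exists>\<eta> \<delta> :: int. 0 \<le> \<eta> \<and> \<eta> \<le> (int m * a) ^ m \<and> 0 < \<delta> \<and> \<delta> \<le> (int m * a) ^ m \<and>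
            real_of_int \<eta> / real_of_int \<delta> \<in> model_probs D p IC Q t \<and>
            (\<forall>x\<in>model_probs D p IC Q t. x \<le> real_of_int \<eta> / real_of_int \<delta>))"
proof -
  have fin: "finite D" using assms(1) by (simp add: pdb_def)
  obtain Mmin where Mmin: "is_basic_model D p IC Mmin"
    "\<forall>x\<in>model_probs D p IC Q t. query_prob D Mmin Q t \<le> x"
    using exists_basic_model_min_query_prob[OF fin assms(2)] by blast
  obtain Mmax where Mmax: "is_basic_model D p IC Mmax"
    "\<forall>x\<in>model_probs D p IC Q t. x \<le> query_prob D Mmax Q t"
    using exists_basic_model_max_query_prob[OF fin assms(2)] by blast
  have "query_prob D Mmin Q t \<in> model_probs D p IC Q t" "query_prob D Mmax Q t \<in> model_probs D p IC Q t"
    using Mmin(1) Mmax(1) by (auto simp: model_probs_def is_basic_model_def)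
  with Mmin Mmax show ?thesis
    using basic_model_query_prob_fraction[OF assms(1), of IC _ Q t] unfolding m_def a_def by metis
qed

end
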